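(* Let $\triangle$ be an apexed triangle with definer $s$ and let $x\in P$. If there is a point $x'$ on $\pi(s,x)$ with $f_\triangle(x')<d(s,x')$, then $f_\triangle(x)<d(s,x)$.
   Context: $P$ is a simple polygon, $S$ a finite set of sites in $P$, $\pi(x,y)$ the shortest path in $P$ between $x$ and $y$, and $d(x,y)$ its Euclidean length. An apexed triangle is a Euclidean triangle $\triangle\subseteq P$ with corners $a,b,c$, where the apex $a$ is a vertex of $P$, $b,c$ lie on a common edge of $P$, together with a site $s\in S$ (the definer) such that $d(x,s)=\|x-a\|+d(a,s)$ for all $x\in\triangle$. Its function $f_\triangle$ is defined as follows. Let $u_1=(b-a)/\|b-a\|$, $u_2=(c-a)/\|c-a\|$, $R_{in}=\{a+\lambda u_1+\mu u_2:\lambda,\mu\ge0\}$, $L=\{x\notin R_{in}:\langle x-a,u_1\rangle\ge\langle x-a,u_2\rangle\}$, $R=\{x\notin R_{in}:\langle x-a,u_2\rangle>\langle x-a,u_1\rangle\}$, $L_{top}=\{x\in L:\langle x-a,u_1\rangle<0\}$, $R_{top}=\{x\in R:\langle x-a,u_2\rangle<0\}$. For $x\in L$ (resp. $R$) let $\hat x$ be the orthogonal projection of $x$ onto the line through $a$ with direction $u_1$ (resp. $u_2$); for $x\in R_{in}$ let $\hat x=x$. Then $f_\triangle(x)=d(a,s)-\|\hat x-a\|$ for $x\in L_{top}\cup R_{top}$ and $f_\triangle(x)=d(a,s)+\|\hat x-a\|$ otherwise. *)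

theory Defs
  imports "HOL-Analysis.Analysis"
begin

type_synonym pt = "real ^ 2"

definition poly_edge :: "pt list \<Rightarrow> nat \<Rightarrow> pt set" where
  "poly_edge vs i = closed_segment (vs ! i) (vs ! ((i + 1) mod length vs))"

definition simple_polygon :: "pt list \<Rightarrow> bool" where
  "simple_polygon vs \<longleftrightarrow>
     length vs \<ge> 3 \<and> distinct vs \<and>
     (\<forall>i < length vs. \<forall>j < length vs. i \<noteq> j \<longrightarrow>
        (if j = (i + 1) mod length vs then poly_edge vs i \<inter> poly_edge vs j = {vs ! j}
         else if i = (j + 1) mod length vs then poly_edge vs i \<inter> poly_edge vs j = {vs ! i}
         else poly_edge vs i \<inter> poly_edge vs j = {}))"

definition poly_boundary :: "pt list \<Rightarrow> pt set" where
  "poly_boundary vs = (\<Union>i < length vs. poly_edge vs i)"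

definition polygon_region :: "pt list \<Rightarrow> pt set" where
  "polygon_region vs = poly_boundary vs \<union> inside (poly_boundary vs)"

definition poly_chain :: "pt set \<Rightarrow> pt \<Rightarrow> pt \<Rightarrow> pt list \<Rightarrow> bool" where
  "poly_chain P x y ps \<longleftrightarrow> ps \<noteq> [] \<and> hd ps = x \<and> last ps = y \<and>
     (\<forall>i < length ps - 1. closed_segment (ps ! i) (ps ! Suc i) \<subseteq> P)"

definition chain_len :: "pt list \<Rightarrow> real" where
  "chain_len ps = (\<Sum>i < length ps - 1. dist (ps ! i) (ps ! Suc i))"

definition chain_image :: "pt list \<Rightarrow> pt set" where
  "chain_image ps = set ps \<union> (\<Union>i < length ps - 1. closed_segment (ps ! i) (ps ! Suc i))"

definition gdist :: "pt set \<Rightarrow> pt \<Rightarrow> pt \<Rightarrow> real" where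
  "gdist P x y = Inf (chain_len ` {ps. poly_chain P x y ps})"

definition on_shortest_path :: "pt set \<Rightarrow> pt \<Rightarrow> pt \<Rightarrow> pt \<Rightarrow> bool" where
  "on_shortest_path P x y z \<longleftrightarrow>
     (\<exists>ps. poly_chain P x y ps \<and> chain_len ps = gdist P x y \<and> z \<in> chain_image ps)"

definition apexed_triangle :: "pt list \<Rightarrow> pt set \<Rightarrow> pt \<Rightarrow> pt \<Rightarrow> pt \<Rightarrow> pt \<Rightarrow> bool" where
  "apexed_triangle vs S a b c s \<longleftrightarrow>
     \<not> collinear {a, b, c} \<and>
     convex hull {a, b, c} \<subseteq> polygon_region vs \<and>
     a \<in> set vs \<and>
     (\<exists>i < length vs. b \<in> poly_edge vs i \<and> c \<in> poly_edge vs i) \<and>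
     s \<in> S \<and>
     (\<forall>x \<in> convex hull {a, b, c}.
        gdist (polygon_region vs) x s = norm (x - a) + gdist (polygon_region vs) a s)"

definition f_tri :: "pt set \<Rightarrow> pt \<Rightarrow> pt \<Rightarrow> pt \<Rightarrow> pt \<Rightarrow> pt \<Rightarrow> real" where
  "f_tri P a b c s x =
    (let u1 = (1 / norm (b - a)) *\<^sub>R (b - a);
         u2 = (1 / norm (c - a)) *\<^sub>R (c - a);
         Rin = {a + l *\<^sub>R u1 + m *\<^sub>R u2 | l m. l \<ge> 0 \<and> m \<ge> 0};
         inL = (x \<notin> Rin \<and> (x - a) \<bullet> u1 \<ge> (x - a) \<bullet> u2);
         inR = (x \<notin> Rin \<and> (x - a) \<bullet> u2 > (x - a) \<bullet> u1);
         xh = (if inL then a + ((x - a) \<bullet> u1) *\<^sub>R u1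
               else if inR then a + ((x - a) \<bullet> u2) *\<^sub>R u2 else x);
         top = ((inL \<and> (x - a) \<bullet> u1 < 0) \<or> (inR \<and> (x - a) \<bullet> u2 < 0))
     in if top then gdist P a s - norm (xh - a) else gdist P a s + norm (xh - a))"

end

theory Submission
  imports Defs
begin

text \<open>
  Cut at \<open>x'\<close>, the shortest path \<open>\<pi>(s,x)\<close> shows \<open>d(s,x') + |x' - x| \<le> d(s,x)\<close>.
  On the other hand \<open>f\<^sub>\<triangle>(x) = d(a,s) + G(x - a)\<close>, where \<open>G\<close> is the support function of the
  arc of unit directions in the wedge at \<open>a\<close> spanned by \<open>b - a\<close> and \<open>c - a\<close>: inside the wedge
  \<open>G(v) = |v|\<close>, and outside it the maximum of \<open>v \<bullet> w\<close> over the arc is attained at one of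
  its two ends. Being a maximum of 1-Lipschitz linear functionals, \<open>f\<^sub>\<triangle>\<close> is 1-Lipschitz, hence
  \<open>f\<^sub>\<triangle>(x) \<le> f\<^sub>\<triangle>(x') + |x - x'| < d(s,x') + |x' - x| \<le> d(s,x)\<close>.
\<close>

lemma poly_chain_singleton [simp]: "poly_chain P x y [p] \<longleftrightarrow> x = p \<and> y = p"
  by (auto simp: poly_chain_def)

lemma poly_chain_Cons_Cons [simp]:
  "poly_chain P x y (p # q # rs) \<longleftrightarrow> x = p \<and> closed_segment p q \<subseteq> P \<and> poly_chain P q y (q # rs)"
  by (auto simp: poly_chain_def All_less_Suc2)

lemma chain_len_singleton [simp]: "chain_len [p] = 0"
  by (simp add: chain_len_def)

lemma chain_len_Cons_Cons [simp]: "chain_len (p # q # rs) = dist p q + chain_len (q # rs)"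
  unfolding chain_len_def by (simp only: length_Cons diff_Suc_1 sum.lessThan_Suc_shift) simp

lemma chain_image_singleton [simp]: "chain_image [p] = {p}"
  by (simp add: chain_image_def)

lemma chain_image_Cons_Cons [simp]:
  "chain_image (p # q # rs) = closed_segment p q \<union> chain_image (q # rs)"
  by (auto simp: chain_image_def lessThan_Suc_eq_insert_0)

lemma dist_le_chain_len: "ps \<noteq> [] \<Longrightarrow> dist (hd ps) (last ps) \<le> chain_len ps"
proof (induction ps rule: induct_list012)
  case (3 p q rs)
  then show ?case using dist_triangle[of p "last (q # rs)" q] by simp
qed auto

lemma gdist_le_chain_len:
  assumes "poly_chain P x y ps"
  shows "gdist P x y \<le> chain_len ps"
  unfolding gdist_def
proof (rule cInf_lower)
  show "chain_len ps \<in> chain_len ` {ps. poly_chain P x y ps}" using assms by blast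
  have "0 \<le> chain_len qs" for qs
    unfolding chain_len_def by (simp add: sum_nonneg)
  then show "bdd_below (chain_len ` {ps. poly_chain P x y ps})"
    by (auto intro: bdd_belowI[of _ 0])
qed

lemma poly_chain_prefix:
  assumes "poly_chain P x y ps" "z \<in> chain_image ps"
  shows "\<exists>qs. poly_chain P x z qs \<and> chain_len qs + dist z y \<le> chain_len ps"
  using assms
proof (induction ps arbitrary: x rule: induct_list012)
  case (2 p)
  then show ?case by (intro exI[of _ "[p]"]) simp
next
  case (3 p q rs)
  show ?case
  proof (cases "z \<in> closed_segment p q")
    case True
    then have "closed_segment p z \<subseteq> closed_segment p q" by (simp add: subset_closed_segment)
    then have "closed_segment p z \<subseteq> P" using 3(3) by auto
    moreover have "dist p z + dist z q = dist p q"
      using True by (simp only: between_mem_segment[symmetric] between)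
    moreover have "dist q y \<le> chain_len (q # rs)"
      using dist_le_chain_len[of "q # rs"] 3(3) by (simp add: poly_chain_def)
    ultimately show ?thesis
      using 3(3) dist_triangle[of z y q] by (intro exI[of _ "[p, z]"]) auto
  next
    case False
    then obtain qs where "poly_chain P q z qs" "chain_len qs + dist z y \<le> chain_len (q # rs)"
      using "3.IH"(2) 3(3,4) by fastforce
    moreover obtain qs' where "qs = q # qs'"
      using \<open>poly_chain P q z qs\<close> by (cases qs) (auto simp: poly_chain_def)
    ultimately show ?thesis using 3(3) by (intro exI[of _ "p # qs"]) auto
  qed
qed (simp add: poly_chain_def)

lemma gdist_add_dist_le:
  assumes "on_shortest_path P s x z"
  shows "gdist P s z + dist z x \<le> gdist P s x"
proof -
  obtain ps where "poly_chain P s x ps" "chain_len ps = gdist P s x" "z \<in> chain_image ps"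
    using assms unfolding on_shortest_path_def by blast
  then obtain qs where "poly_chain P s z qs" "chain_len qs + dist z x \<le> gdist P s x"
    using poly_chain_prefix by fastforce
  then show ?thesis using gdist_le_chain_len by fastforce
qed

lemma max_nonneg_if_weighted_sum_nonneg:
  fixes s t x y :: real
  assumes "0 \<le> s" "0 \<le> t" "0 < s + t" "0 \<le> s * x + t * y"
  shows "0 \<le> max x y"
proof -
  have "s * x + t * y \<le> (s + t) * max x y"
    using assms(1,2) by (simp add: distrib_right add_mono mult_left_mono)
  then have "0 \<le> (s + t) * max x y" using assms(4) by linarith
  then show ?thesis using assms(3) by (simp add: zero_le_mult_iff)
qed

definition wedge :: "'a::real_vector \<Rightarrow> 'a \<Rightarrow> 'a set" where
  "wedge u1 u2 = {l *\<^sub>R u1 + m *\<^sub>R u2 | l m. 0 \<le> l \<and> 0 \<le> m}"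

lemma wedge_commute: "wedge u1 u2 = wedge u2 u1"
  unfolding wedge_def by (auto; metis add.commute)

lemma sgn_mem_wedge:
  fixes v u1 u2 :: "'a::real_normed_vector"
  assumes "v \<in> wedge u1 u2"
  shows "sgn v \<in> wedge u1 u2"
proof -
  obtain l m where "v = l *\<^sub>R u1 + m *\<^sub>R u2" "0 \<le> l" "0 \<le> m"
    using assms unfolding wedge_def by blast
  then have "sgn v = (l / norm v) *\<^sub>R u1 + (m / norm v) *\<^sub>R u2"
    and "0 \<le> l / norm v" "0 \<le> m / norm v"
    by (simp_all add: sgn_div_norm scaleR_add_right divide_inverse_commute)
  then show ?thesis unfolding wedge_def by blast
qed

lemma inner_le_max_if_neg_coeff:
  fixes u1 u2 w :: "'a::real_inner" and \<alpha> \<beta> :: real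
  assumes u1: "norm u1 = 1" and u2: "norm u2 = 1" and "u1 \<noteq> u2" and "\<beta> < 0"
    and "w \<in> wedge u1 u2" and nw: "norm w = 1"
  defines "v \<equiv> \<alpha> *\<^sub>R u1 + \<beta> *\<^sub>R u2"
  shows "v \<bullet> w \<le> max (v \<bullet> u1) (v \<bullet> u2)"
proof -
  obtain l m where w: "w = l *\<^sub>R u1 + m *\<^sub>R u2" "0 \<le> l" "0 \<le> m"
    using \<open>w \<in> wedge u1 u2\<close> unfolding wedge_def by blast
  define k where "k = u1 \<bullet> u2"
  define a1 where "a1 = w \<bullet> u1"
  define a2 where "a2 = w \<bullet> u2"
  have u11: "u1 \<bullet> u1 = 1" and u22: "u2 \<bullet> u2 = 1" using u1 u2 by (simp_all add: dot_square_norm)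
  have "a1 \<le> 1" "a2 \<le> 1"
    unfolding a1_def a2_def using norm_cauchy_schwarz[of w u1] norm_cauchy_schwarz[of w u2] nw u1 u2
    by auto
  have "-1 \<le> k" using Cauchy_Schwarz_ineq2[of u1 u2] u1 u2 unfolding k_def by simp
  have "0 < norm (u1 - u2) ^ 2" using \<open>u1 \<noteq> u2\<close> by simp
  also have "norm (u1 - u2) ^ 2 = 2 - 2 * k"
    unfolding k_def
    by (simp add: power2_norm_eq_inner inner_diff_left inner_diff_right u11 u22 inner_commute)
  finally have "k < 1" by simp
  have "1 \<le> l + m"
    using norm_triangle_ineq[of "l *\<^sub>R u1" "m *\<^sub>R u2"] nw w u1 u2 by simp
  have "a1 + a2 = (l + m) * (1 + k)"
    unfolding a1_def a2_def k_def w
    by (simp add: inner_add_left u11 u22 inner_commute algebra_simps)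
  also have "\<dots> \<ge> 1 + k"
    using mult_right_mono[of 1 "l + m" "1 + k"] \<open>1 \<le> l + m\<close> \<open>-1 \<le> k\<close> by simp
  finally have "1 + k \<le> a1 + a2" .
  have "v \<bullet> u1 = \<alpha> + \<beta> * k" "v \<bullet> u2 = \<alpha> * k + \<beta>" "v \<bullet> w = \<alpha> * a1 + \<beta> * a2"
    unfolding v_def k_def a1_def a2_def
    by (simp_all add: inner_add_left inner_add_right u11 u22 inner_commute)
  \<comment> \<open>weights \<open>a1 - k, 1 - a1 \<ge> 0\<close> chosen to cancel the \<open>\<alpha>\<close>-terms\<close>
  then have "(a1 - k) * (v \<bullet> u1 - v \<bullet> w) + (1 - a1) * (v \<bullet> u2 - v \<bullet> w)
      = \<beta> * ((1 - k) * (1 + k - a1 - a2))"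
    by (simp add: algebra_simps)
  also have "\<dots> \<ge> 0"
    using \<open>\<beta> < 0\<close> \<open>k < 1\<close> \<open>1 + k \<le> a1 + a2\<close> by (simp add: mult_nonpos_nonpos mult_nonneg_nonpos)
  finally have "0 \<le> max (v \<bullet> u1 - v \<bullet> w) (v \<bullet> u2 - v \<bullet> w)"
    using \<open>a2 \<le> 1\<close> \<open>a1 \<le> 1\<close> \<open>1 + k \<le> a1 + a2\<close> \<open>k < 1\<close>
    by (intro max_nonneg_if_weighted_sum_nonneg[of "a1 - k" "1 - a1"]) auto
  then show ?thesis by linarith
qed

lemma inner_le_max_outside_wedge:
  fixes u1 u2 w :: "'a::real_inner" and \<alpha> \<beta> :: real
  assumes "norm u1 = 1" "norm u2 = 1" "u1 \<noteq> u2" "\<alpha> < 0 \<or> \<beta> < 0"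
    and "w \<in> wedge u1 u2" "norm w = 1"
  defines "v \<equiv> \<alpha> *\<^sub>R u1 + \<beta> *\<^sub>R u2"
  shows "v \<bullet> w \<le> max (v \<bullet> u1) (v \<bullet> u2)"
  using assms inner_le_max_if_neg_coeff[of u1 u2 \<beta> w \<alpha>] inner_le_max_if_neg_coeff[of u2 u1 \<alpha> w \<beta>]
  by (auto simp: wedge_commute add.commute max.commute)

text \<open>For \<open>v = x - a\<close> this is the term \<open>\<plusminus>\<parallel>x\<^sup>^ - a\<parallel>\<close> of \<open>f\<^sub>\<triangle>\<close>: off the wedge, \<open>x\<^sup>^\<close> is
  the projection onto the bounding ray with the larger inner product, and the sign makes the
  term equal to that inner product.\<close>
definition signed_proj_len :: "'a::real_inner \<Rightarrow> 'a \<Rightarrow> 'a \<Rightarrow> real" where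
  "signed_proj_len u1 u2 v = (if v \<in> wedge u1 u2 then norm v else max (v \<bullet> u1) (v \<bullet> u2))"

lemma inner_le_signed_proj_len:
  fixes u1 u2 v w :: "'a::real_inner"
  assumes "norm u1 = 1" "norm u2 = 1" "u1 \<noteq> u2" "v \<in> span {u1, u2}"
    and "w \<in> wedge u1 u2" "norm w = 1"
  shows "v \<bullet> w \<le> signed_proj_len u1 u2 v"
proof (cases "v \<in> wedge u1 u2")
  case True
  then show ?thesis using norm_cauchy_schwarz[of v w] \<open>norm w = 1\<close> by (simp add: signed_proj_len_def)
next
  case False
  obtain \<alpha> \<beta> where "v - \<alpha> *\<^sub>R u1 = \<beta> *\<^sub>R u2"
    using \<open>v \<in> span {u1, u2}\<close> by (auto simp: span_insert span_singleton)
  then have v: "v = \<alpha> *\<^sub>R u1 + \<beta> *\<^sub>R u2" by (simp add: algebra_simps)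
  have "\<alpha> < 0 \<or> \<beta> < 0"
  proof (rule ccontr)
    assume "\<not> (\<alpha> < 0 \<or> \<beta> < 0)"
    then have "v \<in> wedge u1 u2"
      unfolding v wedge_def by (intro CollectI exI[of _ \<alpha>] exI[of _ \<beta>]) simp
    then show False using False by blast
  qed
  then show ?thesis
    using inner_le_max_outside_wedge assms False v by (simp add: signed_proj_len_def)
qed

lemma signed_proj_len_attained:
  fixes u1 u2 v :: "'a::real_inner"
  assumes "norm u1 = 1" "norm u2 = 1"
  obtains w where "w \<in> wedge u1 u2" "norm w = 1" "signed_proj_len u1 u2 v = v \<bullet> w"
proof -
  have u1: "u1 \<in> wedge u1 u2"
    unfolding wedge_def by (rule CollectI, rule exI[of _ 1], rule exI[of _ 0]) simp
  have u2: "u2 \<in> wedge u1 u2"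
    unfolding wedge_def by (rule CollectI, rule exI[of _ 0], rule exI[of _ 1]) simp
  consider "v \<in> wedge u1 u2" "v \<noteq> 0" | "v = 0" | "v \<notin> wedge u1 u2"
    by blast
  then show ?thesis
  proof cases
    case 1
    have "v \<bullet> sgn v = norm v" using 1 by (simp add: sgn_div_norm dot_square_norm power2_eq_square)
    then show ?thesis
      using 1 that[OF sgn_mem_wedge] by (simp add: signed_proj_len_def norm_sgn)
  next
    case 2
    then show ?thesis using that[OF u1] assms by (simp add: signed_proj_len_def)
  next
    case 3
    then show ?thesis using that[OF u1] that[OF u2] assms
      by (cases "v \<bullet> u1 \<le> v \<bullet> u2") (auto simp: signed_proj_len_def max_def)
  qed
qed

lemma signed_proj_len_le_add_norm:
  fixes u1 u2 v v' :: "'a::real_inner"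
  assumes "norm u1 = 1" "norm u2 = 1" "u1 \<noteq> u2" "v' \<in> span {u1, u2}"
  shows "signed_proj_len u1 u2 v \<le> signed_proj_len u1 u2 v' + norm (v - v')"
proof -
  obtain w where w: "w \<in> wedge u1 u2" "norm w = 1" "signed_proj_len u1 u2 v = v \<bullet> w"
    using signed_proj_len_attained assms(1,2) by blast
  have "v \<bullet> w = v' \<bullet> w + (v - v') \<bullet> w" by (simp add: inner_diff_left)
  also have "\<dots> \<le> signed_proj_len u1 u2 v' + norm (v - v')"
    using inner_le_signed_proj_len[OF assms w(1,2)] norm_cauchy_schwarz[of "v - v'" w] w(2)
    by simp
  finally show ?thesis using w(3) by simp
qed

lemma not_collinear_sgn:
  fixes p q :: "'a::real_normed_vector"
  assumes "\<not> collinear {0, p, q}"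
  shows "\<not> collinear {0, sgn p, sgn q}"
proof
  assume "collinear {0, sgn p, sgn q}"
  have "p \<noteq> 0" "q \<noteq> 0" using assms by (auto simp: collinear_lemma)
  then obtain k where "sgn q = k *\<^sub>R sgn p"
    using \<open>collinear {0, sgn p, sgn q}\<close> by (auto simp: collinear_lemma sgn_zero_iff)
  have "q = norm q *\<^sub>R sgn q" using \<open>q \<noteq> 0\<close> by (simp add: sgn_div_norm)
  also have "\<dots> = (norm q * k / norm p) *\<^sub>R p"
    using \<open>sgn q = k *\<^sub>R sgn p\<close> by (simp add: sgn_div_norm divide_inverse)
  finally show False using assms by (auto simp: collinear_lemma)
qed

lemma span_pair_eq_UNIV:
  fixes p q :: "real^2"
  assumes "\<not> collinear {0, p, q}"
  shows "span {p, q} = UNIV"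
proof -
  have "p \<noteq> 0" "q \<noteq> 0" using assms by (auto simp: collinear_lemma)
  have "p \<notin> span {q}"
  proof
    assume "p \<in> span {q}"
    then obtain k where "p = k *\<^sub>R q" by (auto simp: span_singleton)
    then have "q = (1 / k) *\<^sub>R p" using \<open>p \<noteq> 0\<close> by auto
    then show False using assms by (auto simp: collinear_lemma)
  qed
  then have "independent {p, q}" using \<open>q \<noteq> 0\<close> by (simp add: independent_insert)
  moreover have "p \<noteq> q" using \<open>p \<notin> span {q}\<close> span_base by blast
  then have "card {p, q} = DIM(real^2)" by simp
  ultimately show ?thesis
    using card_eq_dim[of "{p, q}" UNIV] by (auto simp: dim_UNIV)
qed

lemma f_tri_eq_signed_proj_len:
  assumes "b \<noteq> a" "c \<noteq> a"
  shows "f_tri P a b c s y = gdist P a s + signed_proj_len (sgn (b - a)) (sgn (c - a)) (y - a)"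
proof -
  define u1 where "u1 = sgn (b - a)"
  define u2 where "u2 = sgn (c - a)"
  have u: "(1 / norm (b - a)) *\<^sub>R (b - a) = u1" "(1 / norm (c - a)) *\<^sub>R (c - a) = u2"
    unfolding u1_def u2_def by (simp_all add: sgn_div_norm divide_inverse_commute)
  have "norm u1 = 1" "norm u2 = 1" using assms unfolding u1_def u2_def by (simp_all add: norm_sgn)
  moreover have "y \<in> {a + l *\<^sub>R u1 + m *\<^sub>R u2 | l m. 0 \<le> l \<and> 0 \<le> m} \<longleftrightarrow> y - a \<in> wedge u1 u2"
    unfolding wedge_def by (auto simp: algebra_simps)
  ultimately show ?thesis
    unfolding f_tri_def Let_def u signed_proj_len_def u1_def[symmetric] u2_def[symmetric]
    by (auto simp: max_def)
qed

lemma f_tri_le_add_dist: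
  assumes "\<not> collinear {a, b, c}"
  shows "f_tri P a b c s x \<le> f_tri P a b c s x' + dist x x'"
proof -
  define u1 where "u1 = sgn (b - a)"
  define u2 where "u2 = sgn (c - a)"
  have "\<not> collinear {0, b - a, c - a}"
    using assms collinear_3[of b a c] by (simp add: insert_commute)
  then have nc: "\<not> collinear {0, u1, u2}"
    unfolding u1_def u2_def by (rule not_collinear_sgn)
  have "b \<noteq> a" "c \<noteq> a" using \<open>\<not> collinear {0, b - a, c - a}\<close> by (auto simp: collinear_lemma)
  then have "norm u1 = 1" "norm u2 = 1" unfolding u1_def u2_def by (simp_all add: norm_sgn)
  moreover have "u1 \<noteq> u2" using nc collinear_2 by force
  moreover have "x' - a \<in> span {u1, u2}" using span_pair_eq_UNIV[OF nc] by simp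
  ultimately have "signed_proj_len u1 u2 (x - a) \<le> signed_proj_len u1 u2 (x' - a) + dist x x'"
    using signed_proj_len_le_add_norm[where v = "x - a" and v' = "x' - a"] by (simp add: dist_norm)
  then show ?thesis
    using f_tri_eq_signed_proj_len[OF \<open>b \<noteq> a\<close> \<open>c \<noteq> a\<close>] unfolding u1_def u2_def by simp
qed

theorem mainTheorem9:
  fixes vs :: "pt list" and S :: "pt set" and a b c s x x' :: pt
  assumes "simple_polygon vs"
    and "finite S" and "S \<subseteq> polygon_region vs"
    and "apexed_triangle vs S a b c s"
    and "x \<in> polygon_region vs"
    and "on_shortest_path (polygon_region vs) s x x'"
    and "f_tri (polygon_region vs) a b c s x' < gdist (polygon_region vs) s x'"
  shows "f_tri (polygon_region vs) a b c s x < gdist (polygon_region vs) s x"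
proof -
  let ?P = "polygon_region vs"
  have "\<not> collinear {a, b, c}" using assms(4) by (simp add: apexed_triangle_def)
  then have "f_tri ?P a b c s x \<le> f_tri ?P a b c s x' + dist x' x"
    by (simp add: f_tri_le_add_dist dist_commute)
  also have "\<dots> < gdist ?P s x' + dist x' x" using assms(7) by simp
  also have "\<dots> \<le> gdist ?P s x" using gdist_add_dist_le[OF assms(6)] .
  finally show ?thesis .
qed

end
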